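(* Let $a,b,c\in\mathbb{R}$ be such that $$B=\begin{pmatrix}1&a&b\\ a&1&c\\ b&c&1\end{pmatrix}$$ is positive semidefinite. Put $$c_-=ab-\sqrt{(1-a^2)(1-b^2)},\qquad c_+=ab+\sqrt{(1-a^2)(1-b^2)},$$ $$\Delta_{a,b}=\max\{\sqrt{1-c_-^2},\sqrt{1-c_+^2}\},\qquad \delta_{a,b}=\min\{\sqrt{1-c_-^2},\sqrt{1-c_+^2}\}.$$ (i) If $f$ is a function on $[c_-,c_+]$ with $\delta_{a,b}\le f(x)$ for all $x\in[c_-,c_+]$, then $|a^2-b^2|\le\Delta_{a,b}f(x)$ for all $x\in[c_-,c_+]$. In particular, $|a^2-b^2|\le\Delta_{a,b}\sqrt{1-c^2}$. (ii) If $g$ is a function on $[c_-,c_+]$ with $\sqrt{1-c_+}\le g(x)$ for all $x\in[c_-,c_+]$, then $|a-b|\le\sqrt{1-c_-}\,g(x)$ for all $x\in[c_-,c_+]$. In particular, $|a-b|\le\sqrt{1-c_-}\,\sqrt{1-c}$. (iii) If moreover $a,b,c\in[0,1]$, then $|a-b|\le\sqrt{1-c^2}$. *)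

theory Defs
  imports "HOL-Analysis.Analysis"
begin

definition psd_matrix :: "real^'n^'n \<Rightarrow> bool" where
  "psd_matrix M \<longleftrightarrow> transpose M = M \<and> (\<forall>x. 0 \<le> x \<bullet> (M *v x))"

definition Bmat :: "real \<Rightarrow> real \<Rightarrow> real \<Rightarrow> real^3^3" where
  "Bmat a b c = vector [vector [1, a, b], vector [a, 1, c], vector [b, c, 1]]"

definition c_minus :: "real \<Rightarrow> real \<Rightarrow> real" where
  "c_minus a b = a * b - sqrt ((1 - a^2) * (1 - b^2))"

definition c_plus :: "real \<Rightarrow> real \<Rightarrow> real" where
  "c_plus a b = a * b + sqrt ((1 - a^2) * (1 - b^2))"

definition Delta_ab :: "real \<Rightarrow> real \<Rightarrow> real" where
  "Delta_ab a b = max (sqrt (1 - (c_minus a b)^2)) (sqrt (1 - (c_plus a b)^2))"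

definition delta_ab :: "real \<Rightarrow> real \<Rightarrow> real" where
  "delta_ab a b = min (sqrt (1 - (c_minus a b)^2)) (sqrt (1 - (c_plus a b)^2))"

end

theory Submission
  imports Defs
begin

(* Testing the quadratic form of the psd matrix B on suitable vectors
   gives a^2 \<le> 1, b^2 \<le> 1 and (c - ab)^2 \<le> (1 - a^2)(1 - b^2); the last says
   exactly that c lies in the interval [c_-, c_+], and together these place that
   interval inside [-1, 1].  Everything else is algebra in a and b alone: c_- and c_+
   are the roots of x^2 - 2abx + a^2 + b^2 - 1, whence the two product identities
     (1 - c_-)(1 - c_+) = (a - b)^2   and   (1 - c_-^2)(1 - c_+^2) = (a^2 - b^2)^2,
   i.e. sqrt(1 - c_-) sqrt(1 - c_+) = |a - b| and Delta * delta = |a^2 - b^2|.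
   Parts (i) and (ii) follow by multiplying the lower bounds on f and g by the
   nonnegative factors Delta and sqrt(1 - c_-); the "in particular" statements use
   that 1 - x^2 \<ge> min(1 - c_-^2, 1 - c_+^2) and 1 - x \<ge> 1 - c_+ on [c_-, c_+].
   For (iii), a, b \<ge> 0 gives (a - b)^2 \<le> 1 - c_+^2 \<le> 1 - c^2 when c \<ge> 0.
   The file first treats the matrix, then the algebra of c_\<pm>, then the theorem. *)

lemma Bmat_quadratic_form:
  "(vector [p, q, r] :: real^3) \<bullet> (Bmat a b c *v vector [p, q, r])
     = p*p + q*q + r*r + 2*a*p*q + 2*b*p*r + 2*c*q*r"
  by (simp add: Bmat_def inner_vec_def sum_3 matrix_vector_mult_def algebra_simps)

lemma psd_Bmat_form_nonneg:
  assumes "psd_matrix (Bmat a b c)"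
  shows "0 \<le> p*p + q*q + r*r + 2*a*p*q + 2*b*p*r + 2*c*q*r"
  using assms Bmat_quadratic_form[of p q r a b c] unfolding psd_matrix_def by metis

text \<open>The entries of a psd correlation matrix: the off-diagonal entries are bounded by 1,
  and the \<open>c\<close>-entry obeys the 2x2-determinant bound coming from \<open>det B \<ge> 0\<close>.\<close>
lemma psd_Bmat_entries:
  assumes "psd_matrix (Bmat a b c)"
  shows "a^2 \<le> 1" "b^2 \<le> 1" "(c - a*b)^2 \<le> (1 - a^2) * (1 - b^2)"
proof -
  note Q = psd_Bmat_form_nonneg[OF assms]
  show a_le: "a^2 \<le> 1" using Q[of 1 "-a" 0] by (simp add: power2_eq_square)
  show "b^2 \<le> 1" using Q[of 1 0 "-b"] by (simp add: power2_eq_square)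
  have swap: "(1 - a^2)*(1 - b^2) - (c - a*b)^2 = (1 - a^2)*(1 - c^2) - (b - a*c)^2"
    by (simp add: algebra_simps power2_eq_square)
  have bac: "(b - a*c)^2 \<le> 1 - a^2"
    using Q[of 1 "-a" "a*c - b"] by (simp add: power2_eq_square algebra_simps)
  show "(c - a*b)^2 \<le> (1 - a^2) * (1 - b^2)"
  proof (cases "a^2 = 1")
    case True
    then have "(b - a*c)^2 = 0" using bac by (metis diff_self order_antisym zero_le_power2)
    then show ?thesis using True swap by simp
  next
    case False
    then have pos: "0 < 1 - a^2" using a_le by simp
    have "0 \<le> (1 - a^2) * ((1 - a^2)*(1 - c^2) - (b - a*c)^2)"
      using Q[of "a*c - b" "a*b - c" "1 - a^2"] by (simp add: power2_eq_square algebra_simps)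
    then have "0 \<le> (1 - a^2)*(1 - c^2) - (b - a*c)^2"
      using pos by (simp add: zero_le_mult_iff)
    then show ?thesis using swap by simp
  qed
qed

lemma psd_Bmat_c_between:
  assumes "psd_matrix (Bmat a b c)"
  shows "c_minus a b \<le> c" "c \<le> c_plus a b"
proof -
  have "\<bar>c - a*b\<bar> \<le> sqrt ((1 - a^2) * (1 - b^2))"
    using real_sqrt_le_mono[OF psd_Bmat_entries(3)[OF assms]] by simp
  then show "c_minus a b \<le> c" "c \<le> c_plus a b"
    unfolding c_minus_def c_plus_def by auto
qed

lemma radius_squared:
  fixes a b :: real
  assumes "a^2 \<le> 1" "b^2 \<le> 1"
  shows "(sqrt ((1 - a^2) * (1 - b^2)))^2 = (1 - a^2) * (1 - b^2)"
  using assms by simp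

text \<open>The two product identities: \<open>c_\<pm>\<close> are the roots of
  \<open>x^2 - 2abx + a^2 + b^2 - 1\<close>, evaluated at \<open>1\<close> and at \<open>\<pm>1\<close>.\<close>
lemma one_minus_c_product:
  fixes a b :: real
  assumes "a^2 \<le> 1" "b^2 \<le> 1"
  shows "(1 - c_minus a b) * (1 - c_plus a b) = (a - b)^2"
  using radius_squared[OF assms] unfolding c_minus_def c_plus_def
  by (simp add: power2_eq_square algebra_simps)

lemma one_minus_c_sq_product:
  fixes a b :: real
  assumes "a^2 \<le> 1" "b^2 \<le> 1"
  shows "(1 - (c_minus a b)^2) * (1 - (c_plus a b)^2) = (a^2 - b^2)^2"
proof -
  define s where "s = sqrt ((1 - a^2) * (1 - b^2))"
  have s2: "s^2 = (1 - a^2) * (1 - b^2)" using radius_squared[OF assms] by (simp add: s_def)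
  have roots: "c_minus a b * c_plus a b = a^2 + b^2 - 1"
    "(c_minus a b)^2 + (c_plus a b)^2 = 2 * (a^2 * b^2) + 2 * s^2"
    unfolding c_minus_def c_plus_def s_def[symmetric] using s2
    by (simp_all add: power2_eq_square algebra_simps)
  have "(1 - (c_minus a b)^2) * (1 - (c_plus a b)^2)
      = 1 - ((c_minus a b)^2 + (c_plus a b)^2) + (c_minus a b * c_plus a b)^2"
    by (simp add: power2_eq_square algebra_simps)
  also have "\<dots> = (a^2 - b^2)^2" unfolding roots s2 by (simp add: power2_eq_square algebra_simps)
  finally show ?thesis .
qed

lemma c_bounds:
  fixes a b :: real
  assumes "a^2 \<le> 1" "b^2 \<le> 1"
  shows "-1 \<le> c_minus a b" "c_minus a b \<le> c_plus a b" "c_plus a b \<le> 1"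
proof -
  define s where "s = sqrt ((1 - a^2) * (1 - b^2))"
  have s2: "s^2 = (1 - a^2) * (1 - b^2)" using radius_squared[OF assms] by (simp add: s_def)
  have s0: "0 \<le> s" using assms by (simp add: s_def)
  have "\<bar>a\<bar> \<le> 1" "\<bar>b\<bar> \<le> 1" using assms abs_square_le_1 by blast+
  then have "\<bar>a*b\<bar> \<le> 1" by (metis abs_ge_zero abs_mult mult_le_one)
  then have ab: "a*b \<le> 1" "-1 \<le> a*b" by (simp_all add: abs_le_iff)
  have "(1 - a*b)^2 = s^2 + (a - b)^2" "(1 + a*b)^2 = s^2 + (a + b)^2"
    using s2 by (simp_all add: power2_eq_square algebra_simps)
  then have "s^2 \<le> (1 - a*b)^2" "s^2 \<le> (1 + a*b)^2" by simp_all
  then have "s \<le> 1 - a*b" "s \<le> 1 + a*b"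
    using ab by (auto intro: power2_le_imp_le)
  then show "-1 \<le> c_minus a b" "c_minus a b \<le> c_plus a b" "c_plus a b \<le> 1"
    using s0 unfolding c_minus_def c_plus_def s_def[symmetric] by simp_all
qed

lemma Delta_times_delta:
  fixes a b :: real
  assumes "a^2 \<le> 1" "b^2 \<le> 1"
  shows "Delta_ab a b * delta_ab a b = \<bar>a^2 - b^2\<bar>"
proof -
  let ?u = "sqrt (1 - (c_minus a b)^2)" and ?v = "sqrt (1 - (c_plus a b)^2)"
  have "Delta_ab a b * delta_ab a b = ?u * ?v"
    unfolding Delta_ab_def delta_ab_def by (cases "?u \<le> ?v") (auto simp: max_def min_def)
  also have "\<dots> = sqrt ((a^2 - b^2)^2)"
    by (simp add: real_sqrt_mult[symmetric] one_minus_c_sq_product[OF assms])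
  finally show ?thesis by simp
qed

lemma sqrt_one_minus_c_product:
  fixes a b :: real
  assumes "a^2 \<le> 1" "b^2 \<le> 1"
  shows "sqrt (1 - c_minus a b) * sqrt (1 - c_plus a b) = \<bar>a - b\<bar>"
  by (simp add: real_sqrt_mult[symmetric] one_minus_c_product[OF assms])

text \<open>Since \<open>c_-\<close> lies in \<open>[-1, 1]\<close>, the radicands are nonnegative and \<open>\<Delta>\<^sub>a\<^sub>b \<ge> 0\<close>.\<close>
lemma Delta_nonneg:
  fixes a b :: real
  assumes "a^2 \<le> 1" "b^2 \<le> 1"
  shows "0 \<le> Delta_ab a b"
proof -
  have "\<bar>c_minus a b\<bar> \<le> 1" using c_bounds[OF assms] by simp
  then have "0 \<le> sqrt (1 - (c_minus a b)^2)" by (simp add: abs_square_le_1)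
  then show ?thesis unfolding Delta_ab_def by (simp add: le_max_iff_disj)
qed

lemma one_minus_sq_ge_endpoint_min:
  fixes l u x :: real
  assumes "-1 \<le> l" "u \<le> 1" "l \<le> x" "x \<le> u"
  shows "min (1 - l^2) (1 - u^2) \<le> 1 - x^2"
proof (cases "0 \<le> x")
  case True
  then have "x^2 \<le> u^2" using assms by (simp add: power_mono)
  then show ?thesis by simp
next
  case False
  then have "(-x)^2 \<le> (-l)^2" using assms by (intro power_mono) auto
  then show ?thesis by simp
qed

lemma delta_le_sqrt_one_minus_sq:
  fixes a b x :: real
  assumes "a^2 \<le> 1" "b^2 \<le> 1" "x \<in> {c_minus a b..c_plus a b}"
  shows "delta_ab a b \<le> sqrt (1 - x^2)"
proof -
  have "min (1 - (c_minus a b)^2) (1 - (c_plus a b)^2) \<le> 1 - x^2"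
    using assms c_bounds[OF assms(1,2)] by (intro one_minus_sq_ge_endpoint_min) auto
  then show ?thesis unfolding delta_ab_def by (simp add: min_def split: if_splits)
qed

text \<open>For nonnegative \<open>a, b\<close> the bound of part (iii) already holds at the endpoint \<open>c_+\<close>.\<close>
lemma diff_sq_le_one_minus_c_plus_sq:
  fixes a b :: real
  assumes "0 \<le> a" "a \<le> 1" "0 \<le> b" "b \<le> 1"
  shows "(a - b)^2 \<le> 1 - (c_plus a b)^2"
proof -
  have a2: "a^2 \<le> 1" and b2: "b^2 \<le> 1" using assms by (simp_all add: power_le_one)
  have "1 - (c_plus a b)^2 - (a - b)^2 = 2*a*b*(1 - c_plus a b)"
    using radius_squared[OF a2 b2] unfolding c_plus_def
    by (simp add: power2_eq_square algebra_simps)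
  moreover have "0 \<le> 2*a*b*(1 - c_plus a b)" using assms c_bounds(3)[OF a2 b2] by simp
  ultimately show ?thesis by simp
qed

theorem theorem2:
  fixes a b c :: real
  assumes psd: "psd_matrix (Bmat a b c)"
  shows
    "(\<forall>f :: real \<Rightarrow> real.
        (\<forall>x\<in>{c_minus a b..c_plus a b}. delta_ab a b \<le> f x) \<longrightarrow>
        (\<forall>x\<in>{c_minus a b..c_plus a b}. \<bar>a^2 - b^2\<bar> \<le> Delta_ab a b * f x))
     \<and> \<bar>a^2 - b^2\<bar> \<le> Delta_ab a b * sqrt (1 - c^2)
     \<and> (\<forall>g :: real \<Rightarrow> real.
        (\<forall>x\<in>{c_minus a b..c_plus a b}. sqrt (1 - c_plus a b) \<le> g x) \<longrightarrow>
        (\<forall>x\<in>{c_minus a b..c_plus a b}. \<bar>a - b\<bar> \<le> sqrt (1 - c_minus a b) * g x))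
     \<and> \<bar>a - b\<bar> \<le> sqrt (1 - c_minus a b) * sqrt (1 - c)
     \<and> (a \<in> {0..1} \<and> b \<in> {0..1} \<and> c \<in> {0..1} \<longrightarrow> \<bar>a - b\<bar> \<le> sqrt (1 - c^2))"
proof -
  have a2: "a^2 \<le> 1" and b2: "b^2 \<le> 1" using psd_Bmat_entries[OF psd] by simp_all
  have c_in: "c \<in> {c_minus a b..c_plus a b}" using psd_Bmat_c_between[OF psd] by simp
  have sqrt_cm: "0 \<le> sqrt (1 - c_minus a b)" using c_bounds[OF a2 b2] by simp
  note DD = Delta_times_delta[OF a2 b2] and SS = sqrt_one_minus_c_product[OF a2 b2]
  have part_i: "\<bar>a^2 - b^2\<bar> \<le> Delta_ab a b * y" if "delta_ab a b \<le> y" for y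
    using mult_left_mono[OF that Delta_nonneg[OF a2 b2]] DD by simp
  have part_ii: "\<bar>a - b\<bar> \<le> sqrt (1 - c_minus a b) * y" if "sqrt (1 - c_plus a b) \<le> y" for y
    using mult_left_mono[OF that sqrt_cm] SS by simp
  have "\<bar>a - b\<bar> \<le> sqrt (1 - c^2)" if "a \<in> {0..1}" "b \<in> {0..1}" "c \<in> {0..1}"
  proof -
    have "(a - b)^2 \<le> 1 - (c_plus a b)^2" using that by (intro diff_sq_le_one_minus_c_plus_sq) auto
    also have "\<dots> \<le> 1 - c^2" using that c_in by (simp add: power_mono)
    finally show ?thesis using real_sqrt_le_mono by fastforce
  qed
  moreover have "delta_ab a b \<le> sqrt (1 - c^2)" by (rule delta_le_sqrt_one_minus_sq[OF a2 b2 c_in])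
  moreover have "sqrt (1 - c_plus a b) \<le> sqrt (1 - c)" using c_in by simp
  ultimately show ?thesis using part_i part_ii by blast
qed

end
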